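(* Let $A$ be an associative $F$-algebra graded by $\mathbb Z^n$, equipped with a bicharacter $p$ on homogeneous elements (so $p_{uu',v}=p_{u,v}p_{u',v}$ and $p_{u,vv'}=p_{u,v}p_{u,v'}$). Let $u_1,\dots,u_m\in A$ be homogeneous elements such that for all $1\le i,j\le m$, $u_iu_j=p_{u_i,u_j}u_ju_i$ with $p_{u_i,u_j}\in F^*$, $p_{u_i,u_j}p_{u_j,u_i}=1$, and $p_{u_i,u_j}=1$ whenever $u_i=u_j$. Then $$[u_1,\dots,u_m]_R=\prod_{j=1}^{m-1}p_{u_m\cdots u_{j+1},\,u_j}\bigl(p_{u_j,\,u_m\cdots u_{j+1}}^{3}-1\bigr)\,u_m\cdots u_2u_1,$$ where $[u_1,\dots,u_m]_R:=[u_1,[u_2,\cdots[u_{m-1},u_m]_R\cdots]_R]_R$.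
   Context: For homogeneous $u,v$, $[u,v]_R=p_{u,v}uv-p_{v,u}vu$, extended bilinearly. Typical instance: $A=\mathfrak B(V)$ for a braided vector space of diagonal type with matrix $(p_{i,j})$, graded by $\deg x_i=e_i$, with $p_{u,v}=\prod_{i,j}p_{i,j}^{a_ib_j}$ for $\deg u=\sum a_ie_i$, $\deg v=\sum b_je_j$. *)

theory Defs
  imports "HOL-Analysis.Finite_Cartesian_Product"
begin

definition F_algebra :: "('f::field \<Rightarrow> 'a::ring_1 \<Rightarrow> 'a) \<Rightarrow> bool" where
  "F_algebra sm \<longleftrightarrow> module sm \<and>
     (\<forall>c x y. sm c (x * y) = sm c x * y \<and> sm c (x * y) = x * sm c y)"

definition graded_by :: "('f::field \<Rightarrow> 'a::ring_1 \<Rightarrow> 'a) \<Rightarrow> (int ^ 'n \<Rightarrow> 'a set) \<Rightarrow> bool" where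
  "graded_by sm Agr \<longleftrightarrow>
     (\<forall>g. module.subspace sm (Agr g)) \<and>
     (\<forall>g h x y. x \<in> Agr g \<longrightarrow> y \<in> Agr h \<longrightarrow> x * y \<in> Agr (g + h)) \<and>
     (\<forall>x. \<exists>S f. finite S \<and> (\<forall>g\<in>S. f g \<in> Agr g) \<and> x = (\<Sum>g\<in>S. f g)) \<and>
     (\<forall>S f. finite S \<longrightarrow> (\<forall>g\<in>S. f g \<in> Agr g) \<longrightarrow> (\<Sum>g\<in>S. f g) = 0 \<longrightarrow> (\<forall>g\<in>S. f g = 0))"

definition bicharacter :: "(int ^ 'n \<Rightarrow> int ^ 'n \<Rightarrow> 'f::field) \<Rightarrow> bool" where
  "bicharacter p \<longleftrightarrow> (\<forall>g h. p g h \<noteq> 0) \<and>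
     (\<forall>g g' h. p (g + g') h = p g h * p g' h) \<and>
     (\<forall>g h h'. p g (h + h') = p g h * p g h')"

definition rbr :: "('f::field \<Rightarrow> 'a::ring_1 \<Rightarrow> 'a) \<Rightarrow> (int ^ 'n \<Rightarrow> int ^ 'n \<Rightarrow> 'f)
     \<Rightarrow> int ^ 'n \<Rightarrow> int ^ 'n \<Rightarrow> 'a \<Rightarrow> 'a \<Rightarrow> 'a" where
  "rbr sm p a b u v = sm (p a b) (u * v) - sm (p b a) (v * u)"

text \<open>Iterated right-nested bracket [u_i1,[u_i2,...[u_i(k-1),u_ik]_R...]_R]_R over a list of
  indices; the inner bracket is homogeneous of degree the sum of the degrees.\<close>
fun iter_rbr :: "('f::field \<Rightarrow> 'a::ring_1 \<Rightarrow> 'a) \<Rightarrow> (int ^ 'n \<Rightarrow> int ^ 'n \<Rightarrow> 'f)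
     \<Rightarrow> (nat \<Rightarrow> 'a) \<Rightarrow> (nat \<Rightarrow> int ^ 'n) \<Rightarrow> nat list \<Rightarrow> 'a" where
  "iter_rbr sm p u d [] = 0"
| "iter_rbr sm p u d [i] = u i"
| "iter_rbr sm p u d (i # j # is) =
     rbr sm p (d i) (sum_list (map d (j # is))) (u i) (iter_rbr sm p u d (j # is))"

end

theory Submission imports Defs begin

text \<open>Since \<open>p\<close> is a bicharacter, \<open>u\<^sub>j\<close> skew-commutes with the product
  \<open>V = u\<^sub>m \<cdots> u\<^sub>j\<^sub>+\<^sub>1\<close> with coefficient \<open>a = p\<^bsub>u\<^sub>j,V\<^esub>\<close>, and \<open>b = p\<^bsub>V,u\<^sub>j\<^esub> = a\<^sup>-\<^sup>1\<close>.
  Hence \<open>[u\<^sub>j, V]\<^sub>R = (a\<^sup>2 - b) V u\<^sub>j = b (a\<^sup>3 - 1) V u\<^sub>j\<close>, and since the bracket is linear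
  in its second argument, induction from the right end of the nested bracket gives the
  product formula.\<close>

lemma bicharacter_zero:
  assumes "bicharacter p"
  shows "p g 0 = 1" "p 0 g = 1"
proof -
  have "p g 0 \<noteq> 0" "p 0 g \<noteq> 0" "p g (0 + 0) = p g 0 * p g 0" "p (0 + 0) g = p 0 g * p 0 g"
    using assms unfolding bicharacter_def by blast+
  then show "p g 0 = 1" "p 0 g = 1" by auto
qed

lemma bicharacter_sum_list_right:
  assumes "bicharacter p"
  shows "p g (sum_list (map d xs)) = prod_list (map (\<lambda>i. p g (d i)) xs)"
  using assms by (induction xs) (auto simp: bicharacter_zero bicharacter_def)

lemma bicharacter_sum_list_left:
  assumes "bicharacter p"
  shows "p (sum_list (map d xs)) g = prod_list (map (\<lambda>i. p (d i) g) xs)"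
  using assms by (induction xs) (auto simp: bicharacter_zero bicharacter_def)

lemma bicharacter_sum_list_inverse:
  assumes "bicharacter p" and "\<forall>i\<in>set xs. p (d i) g * p g (d i) = 1"
  shows "p (sum_list (map d xs)) g * p g (sum_list (map d xs)) = 1"
proof -
  have "p (sum_list (map d xs)) g * p g (sum_list (map d xs))
      = prod_list (map (\<lambda>i. p (d i) g * p g (d i)) xs)"
    unfolding bicharacter_sum_list_left[OF assms(1)] bicharacter_sum_list_right[OF assms(1)]
    by (induction xs) (simp_all add: mult_ac)
  also have "\<dots> = 1"
    using assms(2) by (induction xs) auto
  finally show ?thesis .
qed

lemma F_algebra_module: "F_algebra sm \<Longrightarrow> module sm"
  unfolding F_algebra_def by blast

lemma F_algebra_scale_mult_left: "F_algebra sm \<Longrightarrow> sm c x * y = sm c (x * y)"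
  unfolding F_algebra_def by metis

lemma F_algebra_scale_mult_right: "F_algebra sm \<Longrightarrow> x * sm c y = sm c (x * y)"
  unfolding F_algebra_def by metis

lemma skew_commute_prod_list:
  fixes sm :: "'f::field \<Rightarrow> 'a::ring_1 \<Rightarrow> 'a"
  assumes alg: "F_algebra sm" and bich: "bicharacter p"
    and comm: "\<forall>i\<in>set xs. u j * u i = sm (p (d j) (d i)) (u i * u j)"
  shows "u j * prod_list (map u xs) = sm (p (d j) (sum_list (map d xs))) (prod_list (map u xs) * u j)"
  using comm
proof (induction xs)
  case Nil
  interpret module sm using F_algebra_module[OF alg] .
  show ?case by (simp add: bicharacter_zero[OF bich])
next
  case (Cons i xs)
  interpret module sm using F_algebra_module[OF alg] .
  let ?P = "prod_list (map u xs)"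
  have "u j * prod_list (map u (i # xs)) = (u j * u i) * ?P"
    by (simp add: mult.assoc)
  also have "\<dots> = sm (p (d j) (d i)) (u i * (u j * ?P))"
    using Cons.prems by (simp add: F_algebra_scale_mult_left[OF alg] mult.assoc)
  also have "\<dots> = sm (p (d j) (d i) * p (d j) (sum_list (map d xs))) (u i * ?P * u j)"
    using Cons by (simp add: F_algebra_scale_mult_right[OF alg] mult.assoc)
  also have "\<dots> = sm (p (d j) (sum_list (map d (i # xs)))) (prod_list (map u (i # xs)) * u j)"
    using bich by (simp add: bicharacter_def)
  finally show ?case .
qed

lemma rbr_scale_right:
  assumes "F_algebra sm"
  shows "rbr sm p g h x (sm c y) = sm c (rbr sm p g h x y)"
proof -
  interpret module sm using F_algebra_module[OF assms] .
  show ?thesis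
    unfolding rbr_def
    by (simp add: F_algebra_scale_mult_left[OF assms] F_algebra_scale_mult_right[OF assms]
        scale_right_diff_distrib mult.commute)
qed

lemma rbr_skew_commuting:
  assumes alg: "F_algebra sm"
    and comm: "x * y = sm (p g h) (y * x)" and inv: "p h g * p g h = 1"
  shows "rbr sm p g h x y = sm (p h g * (p g h ^ 3 - 1)) (y * x)"
proof -
  interpret module sm using F_algebra_module[OF alg] .
  have "p h g * (p g h ^ 3 - 1) = (p h g * p g h) * p g h * p g h - p h g"
    by (simp add: algebra_simps power3_eq_cube)
  also have "\<dots> = p g h * p g h - p h g"
    using inv by simp
  finally have coeff: "p h g * (p g h ^ 3 - 1) = p g h * p g h - p h g" .
  show ?thesis
    unfolding rbr_def comm coeff by (simp add: scale_left_diff_distrib)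
qed

lemma rbr_prod_list_skew_commuting:
  fixes sm :: "'f::field \<Rightarrow> 'a::ring_1 \<Rightarrow> 'a"
  assumes alg: "F_algebra sm" and bich: "bicharacter p"
    and comm: "\<forall>i\<in>set ys. u j * u i = sm (p (d j) (d i)) (u i * u j)"
    and inv: "\<forall>i\<in>set ys. p (d i) (d j) * p (d j) (d i) = 1"
  shows "rbr sm p (d j) (sum_list (map d ys)) (u j) (prod_list (map u ys)) =
    sm (p (sum_list (map d ys)) (d j) * (p (d j) (sum_list (map d ys)) ^ 3 - 1))
       (prod_list (map u ys) * u j)"
  by (rule rbr_skew_commuting[where p = p, OF alg skew_commute_prod_list[OF alg bich comm]
        bicharacter_sum_list_inverse[OF bich inv]])

lemma iter_rbr_Cons:
  "xs \<noteq> [] \<Longrightarrow>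
    iter_rbr sm p u d (i # xs) = rbr sm p (d i) (sum_list (map d xs)) (u i) (iter_rbr sm p u d xs)"
  by (cases xs) simp_all

text \<open>The hypothesis \<open>1 \<le> j\<close> matters only for \<open>j = m = 0\<close>, where the truncated
  \<open>m - 1\<close> would make the product of coefficients nonempty.\<close>

lemma iter_rbr_upt_skew_commuting:
  fixes sm :: "'f::field \<Rightarrow> 'a::ring_1 \<Rightarrow> 'a"
  assumes alg: "F_algebra sm" and bich: "bicharacter p" and "1 \<le> j" "j \<le> m"
    and comm: "\<forall>i\<in>{j..m}. \<forall>k\<in>{j..m}. u i * u k = sm (p (d i) (d k)) (u k * u i)"
    and inv: "\<forall>i\<in>{j..m}. \<forall>k\<in>{j..m}. p (d i) (d k) * p (d k) (d i) = 1"
  shows "iter_rbr sm p u d [j..<m+1] =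
    sm (\<Prod>i=j..m-1. p (\<Sum>k=i+1..m. d k) (d i) * (p (d i) (\<Sum>k=i+1..m. d k) ^ 3 - 1))
       (prod_list (map u (rev [j..<m+1])))"
  using assms(3-)
proof (induction "m - j" arbitrary: j)
  case 0
  interpret module sm using F_algebra_module[OF alg] .
  from 0 show ?case by simp
next
  case (Suc n)
  interpret module sm using F_algebra_module[OF alg] .
  define xs where "xs = [j+1..<m+1]"
  define V where "V = prod_list (map u (rev xs))"
  define c where "c i = p (\<Sum>k=i+1..m. d k) (d i) * (p (d i) (\<Sum>k=i+1..m. d k) ^ 3 - 1)" for i
  have jm: "j < m" and upt_j: "[j..<m+1] = j # xs" and "xs \<noteq> []"
    using Suc.hyps(2) Suc.prems(2) by (simp_all add: xs_def upt_conv_Cons)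
  have D_xs: "sum_list (map d xs) = (\<Sum>k=j+1..m. d k)"
    unfolding xs_def
    by (simp only: interv_sum_list_conv_sum_set_nat set_upt) (simp add: atLeastLessThanSuc_atLeastAtMost)
  then have D_rev: "sum_list (map d (rev xs)) = (\<Sum>k=j+1..m. d k)"
    by (simp add: rev_map[symmetric] sum_list_rev del: rev_map)
  have IH: "iter_rbr sm p u d xs = sm (\<Prod>i=j+1..m-1. c i) V"
  proof -
    have "n = m - (j+1)" "1 \<le> j+1" "j+1 \<le> m"
      using Suc.hyps(2) jm by simp_all
    moreover have "{j+1..m} \<subseteq> {j..m}" by auto
    then have "\<forall>i\<in>{j+1..m}. \<forall>k\<in>{j+1..m}. u i * u k = sm (p (d i) (d k)) (u k * u i)"
      and "\<forall>i\<in>{j+1..m}. \<forall>k\<in>{j+1..m}. p (d i) (d k) * p (d k) (d i) = 1"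
      using Suc.prems(3,4) by blast+
    ultimately show ?thesis
      unfolding xs_def V_def c_def by (rule Suc.hyps(1))
  qed
  have "set (rev xs) \<subseteq> {j..m}" and "j \<in> {j..m}"
    using jm by (auto simp: xs_def)
  then have "\<forall>i\<in>set (rev xs). u j * u i = sm (p (d j) (d i)) (u i * u j)"
    and "\<forall>i\<in>set (rev xs). p (d i) (d j) * p (d j) (d i) = 1"
    using Suc.prems(3,4) by blast+
  from rbr_prod_list_skew_commuting[OF alg bich this]
  have bracket: "rbr sm p (d j) (\<Sum>k=j+1..m. d k) (u j) V = sm (c j) (V * u j)"
    unfolding D_rev V_def c_def .
  have "iter_rbr sm p u d [j..<m+1] = rbr sm p (d j) (\<Sum>k=j+1..m. d k) (u j) (sm (\<Prod>i=j+1..m-1. c i) V)"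
    unfolding upt_j iter_rbr_Cons[OF \<open>xs \<noteq> []\<close>] IH D_xs ..
  also have "\<dots> = sm (c j * (\<Prod>i=j+1..m-1. c i)) (V * u j)"
    unfolding rbr_scale_right[OF alg] bracket scale_scale by (simp add: mult.commute)
  also have "\<dots> = sm (\<Prod>i=j..m-1. c i) (prod_list (map u (rev [j..<m+1])))"
  proof -
    have "(\<Prod>i=j..m-1. c i) = c j * (\<Prod>i=j+1..m-1. c i)"
      using jm by (simp add: prod.atLeast_Suc_atMost)
    moreover have "prod_list (map u (rev [j..<m+1])) = V * u j"
      unfolding upt_j V_def by simp
    ultimately show ?thesis by simp
  qed
  finally show ?case unfolding c_def .
qed

theorem lemma3p3:
  fixes sm :: "'f::field \<Rightarrow> 'a::ring_1 \<Rightarrow> 'a"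
    and Agr :: "int ^ 'n \<Rightarrow> 'a set"
    and p :: "int ^ 'n \<Rightarrow> int ^ 'n \<Rightarrow> 'f"
    and u :: "nat \<Rightarrow> 'a" and d :: "nat \<Rightarrow> int ^ 'n" and m :: nat
  assumes alg: "F_algebra sm"
    and gr: "graded_by sm Agr"
    and bich: "bicharacter p"
    and m1: "m \<ge> 1"
    and hom: "\<forall>i\<in>{1..m}. u i \<in> Agr (d i)"
    and comm: "\<forall>i\<in>{1..m}. \<forall>j\<in>{1..m}. u i * u j = sm (p (d i) (d j)) (u j * u i)"
    and nz: "\<forall>i\<in>{1..m}. \<forall>j\<in>{1..m}. p (d i) (d j) \<noteq> 0"
    and inv: "\<forall>i\<in>{1..m}. \<forall>j\<in>{1..m}. p (d i) (d j) * p (d j) (d i) = 1"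
    and diag: "\<forall>i\<in>{1..m}. \<forall>j\<in>{1..m}. u i = u j \<longrightarrow> p (d i) (d j) = 1"
  shows "iter_rbr sm p u d [1..<m+1] =
    sm (\<Prod>j=1..m-1. p (\<Sum>k=j+1..m. d k) (d j) * (p (d j) (\<Sum>k=j+1..m. d k) ^ 3 - 1))
       (prod_list (map u (rev [1..<m+1])))"
  using iter_rbr_upt_skew_commuting[OF alg bich order_refl m1 comm inv] .

end
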